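(* Let $q\in\mathbb R$ and let $\mu$ be a compactly supported Borel probability measure on $\mathbb R^n$. Then for every $E\subseteq\operatorname{supp}\mu$, $$\mathsf b^q_\mu(E)=\sup_{F\subseteq E}\ \inf\Big\{\sup_i\Theta^q_\mu(F_i):F\subseteq\bigcup_iF_i,\ F_i\text{ bounded}\Big\}$$ and $$\mathsf B^q_\mu(E)=\inf\Big\{\sup_i\mathsf\Delta^q_\mu(E_i):E\subseteq\bigcup_iE_i,\ E_i\text{ bounded}\Big\},$$ where the unions are countable.
   Context: $B(x,r)$ is the closed ball. A centred covering of $E$ by $r$-balls is a family $(B(x_i,r))_i$ with $x_i\in E$ covering $E$; a centred packing is a family $(B(x_i,r))_i$ of pairwise disjoint closed balls with $x_i\in E$. $N^q_{\mu,r}(E)=\inf\sum_i\mu(B(x_i,r))^q$ over centred coverings, $M^q_{\mu,r}(E)=\sup\sum_i\mu(B(x_i,r))^q$ over centred packings. $\mathsf L^{q,t}_\mu(E)=\liminf_{r\to0}N^q_{\mu,r}(E)(2r)^t$, $\mathsf C^{q,t}_\mu(E)=\limsup_{r\to0}M^q_{\mu,r}(E)(2r)^t$; $\overline{\mathsf H}^{q,t}_\mu(E)=\inf\{\sum_i\mathsf L^{q,t}_\mu(E_i):E\subseteq\bigcup_iE_i,\ E_i\text{ bounded}\}$, $\mathsf H^{q,t}_\mu(E)=\sup_{F\subseteq E}\overline{\mathsf H}^{q,t}_\mu(F)$, $\mathsf P^{q,t}_\mu(E)=\inf\{\sum_i\mathsf C^{q,t}_\mu(E_i):E\subseteq\bigcup_iE_i,\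 E_i\text{ bounded}\}$. The numbers $\mathsf b^q_\mu(E),\mathsf B^q_\mu(E),\mathsf\Delta^q_\mu(E),\Theta^q_\mu(E)\in[-\infty,\infty]$ are the unique thresholds in $t$ at which $\mathsf H^{q,t}_\mu(E)$, $\mathsf P^{q,t}_\mu(E)$, $\mathsf C^{q,t}_\mu(E)$, $\mathsf L^{q,t}_\mu(E)$ respectively jump from $\infty$ (for smaller $t$) to $0$ (for larger $t$). *)

theory Defs
  imports "HOL-Analysis.Analysis" "HOL-Probability.Probability"
begin

definition msupp :: "'a::metric_space measure \<Rightarrow> 'a set" where
  "msupp \<mu> = {x. \<forall>e>0. emeasure \<mu> (ball x e) > 0}"

text \<open>The power m^q of a mass m, with the usual multifractal convention
  0^q = \<infinity> for q \<le> 0 and 0^q = 0 for q > 0.\<close>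
definition qpow :: "real \<Rightarrow> real \<Rightarrow> ennreal" where
  "qpow q m = (if m > 0 then ennreal (m powr q) else if q \<le> 0 then \<infinity> else 0)"

definition centred_cover :: "'a::metric_space set \<Rightarrow> real \<Rightarrow> 'a set \<Rightarrow> bool" where
  "centred_cover E r X \<longleftrightarrow> X \<subseteq> E \<and> E \<subseteq> (\<Union>x\<in>X. cball x r)"

definition centred_packing :: "'a::metric_space set \<Rightarrow> real \<Rightarrow> 'a set \<Rightarrow> bool" where
  "centred_packing E r X \<longleftrightarrow> X \<subseteq> E \<and>
     (\<forall>x\<in>X. \<forall>y\<in>X. x \<noteq> y \<longrightarrow> cball x r \<inter> cball y r = {})"

definition Ncov :: "'a::metric_space measure \<Rightarrow> real \<Rightarrow> real \<Rightarrow> 'a set \<Rightarrow> ennreal" where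
  "Ncov \<mu> q r E = (INF X\<in>{X. centred_cover E r X}. \<Sum>\<^sub>\<infinity>x\<in>X. qpow q (measure \<mu> (cball x r)))"

definition Mpack :: "'a::metric_space measure \<Rightarrow> real \<Rightarrow> real \<Rightarrow> 'a set \<Rightarrow> ennreal" where
  "Mpack \<mu> q r E = (SUP X\<in>{X. centred_packing E r X}. \<Sum>\<^sub>\<infinity>x\<in>X. qpow q (measure \<mu> (cball x r)))"

definition Lmf :: "'a::metric_space measure \<Rightarrow> real \<Rightarrow> real \<Rightarrow> 'a set \<Rightarrow> ennreal" where
  "Lmf \<mu> q t E = Liminf (at_right 0) (\<lambda>r. Ncov \<mu> q r E * ennreal ((2 * r) powr t))"

definition Cmf :: "'a::metric_space measure \<Rightarrow> real \<Rightarrow> real \<Rightarrow> 'a set \<Rightarrow> ennreal" where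
  "Cmf \<mu> q t E = Limsup (at_right 0) (\<lambda>r. Mpack \<mu> q r E * ennreal ((2 * r) powr t))"

definition Hbar :: "'a::metric_space measure \<Rightarrow> real \<Rightarrow> real \<Rightarrow> 'a set \<Rightarrow> ennreal" where
  "Hbar \<mu> q t E = (INF Es\<in>{Es :: nat \<Rightarrow> 'a set. E \<subseteq> (\<Union>i. Es i) \<and> (\<forall>i. bounded (Es i))}.
      \<Sum>i. Lmf \<mu> q t (Es i))"

definition Hmf :: "'a::metric_space measure \<Rightarrow> real \<Rightarrow> real \<Rightarrow> 'a set \<Rightarrow> ennreal" where
  "Hmf \<mu> q t E = (SUP F\<in>Pow E. Hbar \<mu> q t F)"

definition Pmf :: "'a::metric_space measure \<Rightarrow> real \<Rightarrow> real \<Rightarrow> 'a set \<Rightarrow> ennreal" where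
  "Pmf \<mu> q t E = (INF Es\<in>{Es :: nat \<Rightarrow> 'a set. E \<subseteq> (\<Union>i. Es i) \<and> (\<forall>i. bounded (Es i))}.
      \<Sum>i. Cmf \<mu> q t (Es i))"

definition threshold :: "(real \<Rightarrow> ennreal) \<Rightarrow> ereal" where
  "threshold f = Inf {ereal t | t. f t = 0}"

definition bdim :: "'a::metric_space measure \<Rightarrow> real \<Rightarrow> 'a set \<Rightarrow> ereal" where
  "bdim \<mu> q E = threshold (\<lambda>t. Hmf \<mu> q t E)"

definition Bdim :: "'a::metric_space measure \<Rightarrow> real \<Rightarrow> 'a set \<Rightarrow> ereal" where
  "Bdim \<mu> q E = threshold (\<lambda>t. Pmf \<mu> q t E)"

definition Deltadim :: "'a::metric_space measure \<Rightarrow> real \<Rightarrow> 'a set \<Rightarrow> ereal" where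
  "Deltadim \<mu> q E = threshold (\<lambda>t. Cmf \<mu> q t E)"

definition Thetadim :: "'a::metric_space measure \<Rightarrow> real \<Rightarrow> 'a set \<Rightarrow> ereal" where
  "Thetadim \<mu> q E = threshold (\<lambda>t. Lmf \<mu> q t E)"

end

theory Submission
  imports Defs
begin

text \<open>The set functions \<open>L\<close> and \<open>C\<close> can only jump from \<open>\<infinity>\<close> to \<open>0\<close>: if \<open>\<phi> t F\<close> is finite,
  then \<open>\<phi> s F = 0\<close> for all \<open>s > t\<close>, because the extra factor \<open>(2r)\<^sup>s\<^sup>-\<^sup>t\<close> tends to 0.  This
  property survives infima of sums over countable covers, and for families having it the
  threshold commutes with such an infimum (turning the sum into a supremum) and with a supremum
  over subsets.  Both identities are instances of this.\<close>

definition zero_above_finite :: "(real \<Rightarrow> 'b \<Rightarrow> ennreal) \<Rightarrow> bool" where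
  "zero_above_finite \<phi> \<longleftrightarrow> (\<forall>t s F. t < s \<longrightarrow> \<phi> t F < \<top> \<longrightarrow> \<phi> s F = 0)"

lemma zero_above_finiteD:
  "zero_above_finite \<phi> \<Longrightarrow> t < s \<Longrightarrow> \<phi> t F < \<top> \<Longrightarrow> \<phi> s F = 0"
  unfolding zero_above_finite_def by blast

lemma zero_above_finite_mono:
  assumes "zero_above_finite \<phi>" "t \<le> s" "\<phi> t F = 0"
  shows "\<phi> s F = 0"
proof (cases "t = s")
  case False
  with assms(2) have "t < s" by simp
  moreover have "\<phi> t F < \<top>" using assms(3) by simp
  ultimately show ?thesis by (rule zero_above_finiteD[OF assms(1)])
qed (use assms(3) in simp)

lemma ereal_dense_ge:
  fixes x y :: ereal
  assumes "\<And>s. y < ereal s \<Longrightarrow> x \<le> ereal s"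
  shows "x \<le> y"
proof (rule ccontr)
  assume "\<not> x \<le> y"
  then have "y < x" by simp
  then obtain z where "y < ereal z" "ereal z < x" using ereal_dense2 by blast
  with assms show False by force
qed

lemma threshold_le: "f t = 0 \<Longrightarrow> threshold f \<le> ereal t"
  unfolding threshold_def by (rule Inf_lower) blast

lemma threshold_less_ereal: "threshold f < ereal s \<Longrightarrow> \<exists>t<s. f t = 0"
  unfolding threshold_def by (auto simp: Inf_less_iff)

lemma threshold_less_ereal_imp_zero:
  assumes "zero_above_finite \<phi>" "threshold (\<lambda>t. \<phi> t F) < ereal s"
  shows "\<phi> s F = 0"
proof -
  obtain t where "t < s" "\<phi> t F = 0" using threshold_less_ereal[OF assms(2)] by blast
  then show ?thesis using zero_above_finite_mono[OF assms(1) less_imp_le] by blast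
qed

lemma threshold_SUP:
  assumes "zero_above_finite g"
  shows "threshold (\<lambda>t. SUP F\<in>A. g t F) = (SUP F\<in>A. threshold (\<lambda>t. g t F))"
proof (rule antisym)
  show "threshold (\<lambda>t. SUP F\<in>A. g t F) \<le> (SUP F\<in>A. threshold (\<lambda>t. g t F))"
  proof (rule ereal_dense_ge)
    fix s assume s: "(SUP F\<in>A. threshold (\<lambda>t. g t F)) < ereal s"
    have "g s F = 0" if "F \<in> A" for F
      using s SUP_upper[OF that, of "\<lambda>F. threshold (\<lambda>t. g t F)"]
      by (intro threshold_less_ereal_imp_zero[OF assms]) simp
    then have "(SUP F\<in>A. g s F) = 0" by (simp add: bot_ennreal[symmetric])
    then show "threshold (\<lambda>t. SUP F\<in>A. g t F) \<le> ereal s" by (rule threshold_le)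
  qed
next
  show "(SUP F\<in>A. threshold (\<lambda>t. g t F)) \<le> threshold (\<lambda>t. SUP F\<in>A. g t F)"
  proof (rule SUP_least)
    fix F assume F: "F \<in> A"
    show "threshold (\<lambda>t. g t F) \<le> threshold (\<lambda>t. SUP F\<in>A. g t F)"
      unfolding threshold_def[of "\<lambda>t. SUP F\<in>A. g t F"]
    proof (rule Inf_greatest)
      fix x assume "x \<in> {ereal t |t. (SUP F\<in>A. g t F) = 0}"
      then obtain t where t: "x = ereal t" "(SUP F\<in>A. g t F) = 0" by blast
      then have "g t F = 0" using SUP_upper[OF F, of "g t"] by simp
      then show "threshold (\<lambda>t. g t F) \<le> x" unfolding t(1) by (rule threshold_le)
    qed
  qed
qed

lemma INF_suminf_less_topD:
  fixes f :: "'b \<Rightarrow> ennreal"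
  assumes "(INF Es\<in>C. \<Sum>i. f (Es i)) < \<top>"
  shows "\<exists>Es\<in>C. \<forall>i. f (Es i) < \<top>"
  using assms by (auto simp: INF_less_iff intro: ennreal_suminf_lessD)

lemma INF_suminf_eq_0_above:
  assumes "zero_above_finite \<phi>" "t < s" "(INF Es\<in>C. \<Sum>i. \<phi> t (Es i)) < \<top>"
  shows "(INF Es\<in>C. \<Sum>i. \<phi> s (Es i)) = 0"
proof -
  obtain Es where Es: "Es \<in> C" "\<And>i. \<phi> t (Es i) < \<top>"
    using INF_suminf_less_topD[OF assms(3)] by blast
  then have "(\<Sum>i. \<phi> s (Es i)) = 0"
    using zero_above_finiteD[OF assms(1,2)] by simp
  then show ?thesis
    using INF_lower[OF Es(1), of "\<lambda>Es. \<Sum>i. \<phi> s (Es i)"] by simp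
qed

lemma zero_above_finite_INF_suminf:
  "zero_above_finite \<phi> \<Longrightarrow> zero_above_finite (\<lambda>t E. INF Es\<in>C E. \<Sum>i. \<phi> t (Es i))"
  unfolding zero_above_finite_def[of "\<lambda>t E. INF Es\<in>C E. \<Sum>i. \<phi> t (Es i)"]
  using INF_suminf_eq_0_above by blast

lemma threshold_INF_suminf:
  assumes J: "zero_above_finite \<phi>"
  shows "threshold (\<lambda>t. INF Es\<in>C. \<Sum>i. \<phi> t (Es i)) =
    (INF Es\<in>C. SUP i. threshold (\<lambda>t. \<phi> t (Es i)))"
    (is "threshold ?\<Phi> = ?R")
proof (rule antisym)
  show "threshold ?\<Phi> \<le> ?R"
  proof (rule ereal_dense_ge)
    fix s assume "?R < ereal s"
    then obtain Es where Es: "Es \<in> C" "(SUP i. threshold (\<lambda>t. \<phi> t (Es i))) < ereal s"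
      by (auto simp: INF_less_iff)
    have "\<phi> s (Es i) = 0" for i
      using Es(2) SUP_upper[of i UNIV "\<lambda>i. threshold (\<lambda>t. \<phi> t (Es i))"]
      by (intro threshold_less_ereal_imp_zero[OF J]) simp
    then have "?\<Phi> s = 0"
      using INF_lower[OF Es(1), of "\<lambda>Es. \<Sum>i. \<phi> s (Es i)"] by simp
    then show "threshold ?\<Phi> \<le> ereal s" by (rule threshold_le)
  qed
next
  show "?R \<le> threshold ?\<Phi>"
  proof (rule ereal_dense_ge)
    fix s assume "threshold ?\<Phi> < ereal s"
    then obtain t where "t < s" "?\<Phi> t = 0" using threshold_less_ereal by blast
    then have "?\<Phi> t < \<top>" by simp
    then obtain Es where Es: "Es \<in> C" "\<And>i. \<phi> t (Es i) < \<top>"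
      using INF_suminf_less_topD by blast
    have "threshold (\<lambda>t. \<phi> t (Es i)) \<le> ereal s" for i
      using zero_above_finiteD[OF J \<open>t < s\<close> Es(2)] by (rule threshold_le)
    then have "(SUP i. threshold (\<lambda>t. \<phi> t (Es i))) \<le> ereal s" by (rule SUP_least)
    then show "?R \<le> ereal s"
      using INF_lower[OF Es(1), of "\<lambda>Es. SUP i. threshold (\<lambda>t. \<phi> t (Es i))"] by simp
  qed
qed

lemma eventually_scaled_less:
  fixes M :: "real \<Rightarrow> ennreal"
  assumes "t < s" "C < \<top>" "0 < \<epsilon>"
  shows "\<forall>\<^sub>F r in at_right 0.
    M r * ennreal ((2*r) powr t) < C \<longrightarrow> M r * ennreal ((2*r) powr s) < \<epsilon>"
proof -
  have "((\<lambda>r::real. (2*r) powr (s - t)) \<longlongrightarrow> 0) (at_right 0)"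
    using assms(1) by (intro tendsto_zero_powrI)
      (auto intro!: tendsto_eq_intros eventually_at_rightI[of 0 1])
  then have "((\<lambda>r. C * ennreal ((2*r) powr (s - t))) \<longlongrightarrow> C * ennreal 0) (at_right 0)"
    using assms(2) by (intro ennreal_tendsto_cmult tendsto_ennrealI) auto
  then have "\<forall>\<^sub>F r in at_right 0. C * ennreal ((2*r) powr (s - t)) < \<epsilon>"
    using assms(3) by (auto dest: order_tendstoD(2))
  with eventually_at_right_less[of 0] show ?thesis
  proof eventually_elim
    case (elim r)
    have "(2*r) powr s = (2*r) powr t * (2*r) powr (s - t)"
      by (simp add: powr_add[symmetric])
    then have "M r * ennreal ((2*r) powr s) = M r * ennreal ((2*r) powr t) * ennreal ((2*r) powr (s - t))"
      by (simp add: ennreal_mult mult.assoc)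
    also have "\<dots> \<le> C * ennreal ((2*r) powr (s - t))"
      if "M r * ennreal ((2*r) powr t) < C" using that by (intro mult_right_mono) auto
    finally show ?case using elim by auto
  qed
qed

lemma zero_above_finite_Cmf: "zero_above_finite (Cmf \<mu> q)"
  unfolding zero_above_finite_def
proof (intro allI impI)
  fix t s F assume "t < s" "Cmf \<mu> q t F < \<top>"
  then obtain C where C: "Cmf \<mu> q t F < C" "C < \<top>" using dense by blast
  have small: "Cmf \<mu> q s F \<le> ennreal e" if "0 < e" for e
  proof -
    have e: "0 < ennreal e" using that by simp
    have "\<forall>\<^sub>F r in at_right 0. Mpack \<mu> q r F * ennreal ((2*r) powr t) < C"
      using C(1) unfolding Cmf_def by (rule Limsup_lessD)
    with eventually_scaled_less[where M = "\<lambda>r. Mpack \<mu> q r F", OF \<open>t < s\<close> C(2) e]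
    have "\<forall>\<^sub>F r in at_right 0. Mpack \<mu> q r F * ennreal ((2*r) powr s) \<le> ennreal e"
      by eventually_elim auto
    then show ?thesis unfolding Cmf_def by (rule Limsup_bounded)
  qed
  have "Cmf \<mu> q s F \<le> 0" by (rule ennreal_le_epsilon) (simp add: small)
  then show "Cmf \<mu> q s F = 0" by simp
qed

lemma zero_above_finite_Lmf: "zero_above_finite (Lmf \<mu> q)"
  unfolding zero_above_finite_def
proof (intro allI impI)
  fix t s F assume "t < s" "Lmf \<mu> q t F < \<top>"
  then obtain C where C: "Lmf \<mu> q t F < C" "C < \<top>" using dense by blast
  have small: "Lmf \<mu> q s F \<le> ennreal e" if "0 < e" for e
  proof (rule ccontr)
    have e: "0 < ennreal e" using that by simp
    assume "\<not> Lmf \<mu> q s F \<le> ennreal e"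
    from this have "\<forall>\<^sub>F r in at_right 0. ennreal e < Ncov \<mu> q r F * ennreal ((2*r) powr s)"
      unfolding Lmf_def by (intro less_LiminfD) simp
    with eventually_scaled_less[where M = "\<lambda>r. Ncov \<mu> q r F", OF \<open>t < s\<close> C(2) e]
    have "\<forall>\<^sub>F r in at_right 0. C \<le> Ncov \<mu> q r F * ennreal ((2*r) powr t)"
      by eventually_elim (auto simp: not_less)
    then have "C \<le> Lmf \<mu> q t F" unfolding Lmf_def by (rule Liminf_bounded)
    with C(1) show False by simp
  qed
  have "Lmf \<mu> q s F \<le> 0" by (rule ennreal_le_epsilon) (simp add: small)
  then show "Lmf \<mu> q s F = 0" by simp
qed

theorem proposition2p6:
  fixes \<mu> :: "'a::euclidean_space measure" and q :: real and E :: "'a set"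
  assumes "sets \<mu> = sets borel"
    and "prob_space \<mu>"
    and "compact (msupp \<mu>)"
    and "E \<subseteq> msupp \<mu>"
  shows "(bdim \<mu> q E =
           (SUP F\<in>Pow E. INF Fs\<in>{Fs :: nat \<Rightarrow> 'a set. F \<subseteq> (\<Union>i. Fs i) \<and> (\<forall>i. bounded (Fs i))}.
              SUP i. Thetadim \<mu> q (Fs i))) \<and>
         (Bdim \<mu> q E =
           (INF Es\<in>{Es :: nat \<Rightarrow> 'a set. E \<subseteq> (\<Union>i. Es i) \<and> (\<forall>i. bounded (Es i))}.
              SUP i. Deltadim \<mu> q (Es i)))"
proof
  have "zero_above_finite (Hbar \<mu> q)"
    unfolding Hbar_def[abs_def] by (intro zero_above_finite_INF_suminf zero_above_finite_Lmf)
  then have "bdim \<mu> q E = (SUP F\<in>Pow E. threshold (\<lambda>t. Hbar \<mu> q t F))"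
    unfolding bdim_def Hmf_def by (rule threshold_SUP)
  then show "bdim \<mu> q E = (SUP F\<in>Pow E. INF Fs\<in>{Fs :: nat \<Rightarrow> 'a set. F \<subseteq> (\<Union>i. Fs i) \<and> (\<forall>i. bounded (Fs i))}.
              SUP i. Thetadim \<mu> q (Fs i))"
    unfolding Hbar_def Thetadim_def
    by (simp add: threshold_INF_suminf[OF zero_above_finite_Lmf])
  show "Bdim \<mu> q E = (INF Es\<in>{Es :: nat \<Rightarrow> 'a set. E \<subseteq> (\<Union>i. Es i) \<and> (\<forall>i. bounded (Es i))}.
              SUP i. Deltadim \<mu> q (Es i))"
    unfolding Bdim_def Pmf_def Deltadim_def
    by (rule threshold_INF_suminf[OF zero_above_finite_Cmf])
qed

end
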